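(* For a (real or complex) variable $z$ and integers $K\ge0$ let $b_K(z)=\sum_{k=0}^{K}C_k\binom{K+k}{K-k}z^k$, where $C_k=\frac{1}{k+1}\binom{2k}{k}$ are the Catalan numbers. Then for $K\ge2$, $$(K+1)b_K(z)=(2K-1)(1+2z)b_{K-1}(z)-(K-2)b_{K-2}(z),$$ and for $K\ge0$, $$b_{K+1}(z)=b_K(z)+z\sum_{l=0}^{K}b_l(z)b_{K-l}(z),$$ with $b_0(z)=1$ and $b_1(z)=1+z$. *)

theory Defs
  imports Complex_Main
begin

definition catalan :: "nat \<Rightarrow> nat" where
  "catalan k = ((2*k) choose k) div (k+1)"

definition bK :: "nat \<Rightarrow> complex \<Rightarrow> complex" where
  "bK K z = (\<Sum>k=0..K. of_nat (catalan k) * of_nat ((K+k) choose (K-k)) * z ^ k)"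

end

theory Submission
  imports Defs "HOL-Computational_Algebra.Formal_Power_Series" "HOL-Computational_Algebra.Polynomial"
begin

text \<open>The polynomial b_K has coefficients C_k binom(K+k, 2k). In the convolution identity, compare
coefficients of z^(m+1): by Pascal's rule, b_(K+1) exceeds b_K there by C_(m+1) binom(K+m+1, 2m+1);
on the other side, summing over l first with the upper Vandermonde identity leaves
(sum_i C_i C_(m-i)) binom(K+m+1, 2m+1), and the Catalan convolution, read off from
(1 - 2x C(x))^2 = 1 - 4x, identifies the two. The three-term recurrence is a hypergeometric identity
between coefficients, which follows from the contiguous relations of C_k binom(K+k, 2k) in K and in k.\<close>

unbundle fps_syntax

lemma binomial_absorb_Suc: "Suc k * (n choose Suc k) = (n - k) * (n choose k)"
  by (simp only: binomial_absorption binomial_absorb_comp)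

lemma gbinomial_absorb_Suc:
  fixes a :: "'a::field_char_0"
  shows "of_nat (Suc k) * (a gchoose Suc k) = (a - of_nat k) * (a gchoose k)"
  by (simp only: gbinomial_absorption gbinomial_absorb_comp)

lemma sum_choose_mult_choose_upper:
  "(\<Sum>q\<le>n. (q choose a) * ((n - q) choose b)) = Suc n choose (a + b + 1)"
proof (induction n arbitrary: b)
  case 0
  then show ?case by (cases a; cases b) auto
next
  case (Suc n)
  show ?case
  proof (cases b)
    case 0
    then show ?thesis
      using sum_choose_upper[where n="Suc n" and m=a] by (simp del: sum.atMost_Suc binomial_Suc_Suc)
  next
    case (Suc b')
    have "(\<Sum>q\<le>Suc n. (q choose a) * ((Suc n - q) choose b))
        = (\<Sum>q\<le>n. (q choose a) * ((n - q) choose b') + (q choose a) * ((n - q) choose b))"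
      using Suc by (auto simp: Suc_diff_le algebra_simps intro!: sum.cong)
    also have "\<dots> = (Suc n choose (a + b' + 1)) + (Suc n choose (a + b + 1))"
      by (simp add: sum.distrib Suc.IH)
    also have "\<dots> = Suc (Suc n) choose (a + b + 1)"
      using Suc by simp
    finally show ?thesis .
  qed
qed

lemma sum_choose_mult_choose_upper_shifted:
  assumes "i \<le> a" "j \<le> b"
  shows "(\<Sum>l\<le>K. ((l + i) choose a) * ((K - l + j) choose b)) = (K + i + j + 1) choose (a + b + 1)"
proof -
  define F where "F q = (q choose a) * ((K + i + j - q) choose b)" for q
  have "(\<Sum>l\<le>K. ((l + i) choose a) * ((K - l + j) choose b)) = (\<Sum>l=0..K. F (l + i))"
    by (auto simp: F_def atLeast0AtMost intro!: sum.cong)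
  also have "\<dots> = (\<Sum>q=i..K+i. F q)"
    using sum.shift_bounds_cl_nat_ivl[of F 0 i K] by simp
  also have "\<dots> = (\<Sum>q\<le>K+i+j. F q)"
  proof (rule sum.mono_neutral_left)
    show "\<forall>q\<in>{..K+i+j} - {i..K+i}. F q = 0"
    proof
      fix q assume q: "q \<in> {..K+i+j} - {i..K+i}"
      show "F q = 0"
      proof (cases "q < i")
        case True
        then show ?thesis using assms by (simp add: F_def)
      next
        case False
        then have "K + i + j - q < b" using q assms by auto
        then show ?thesis by (simp add: F_def)
      qed
    qed
  qed auto
  also have "\<dots> = (K + i + j + 1) choose (a + b + 1)"
    unfolding F_def by (simp add: sum_choose_mult_choose_upper)
  finally show ?thesis .
qed

lemma Suc_times_catalan: "Suc k * catalan k = (2*k) choose k"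
proof -
  have "Suc k * ((2*k) choose Suc k) \<le> Suc k * ((2*k) choose k)"
    unfolding binomial_absorb_Suc by (intro mult_le_mono1) simp
  then have le: "(2*k) choose Suc k \<le> (2*k) choose k"
    by (simp only: Suc_mult_le_cancel1)
  have "Suc k * ((2*k choose k) - (2*k choose Suc k)) = (2*k) choose k"
    using binomial_absorb_Suc[of k "2*k"] le by (simp add: diff_mult_distrib2 algebra_simps)
  then have "Suc k dvd ((2*k) choose k)"
    by (metis dvd_triv_left)
  then show ?thesis
    unfolding catalan_def by (metis Suc_eq_plus1 dvd_mult_div_cancel)
qed

lemma catalan_Suc: "(k + 2) * catalan (Suc k) = 2 * (2*k + 1) * catalan k"
proof -
  have "Suc k * ((k + 2) * catalan (Suc k)) = Suc k * (Suc (Suc (2*k)) choose Suc k)"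
    using Suc_times_catalan[of "Suc k"] by (simp add: ac_simps)
  also have "\<dots> = 2 * (Suc k * (Suc (2*k) choose Suc k))"
    using Suc_times_binomial[of k "Suc (2*k)"] binomial_symmetric[of k "Suc (2*k)"]
    by (simp del: binomial_Suc_Suc)
  also have "\<dots> = 2 * (Suc (2*k) * ((2*k) choose k))"
    by (simp only: Suc_times_binomial)
  also have "\<dots> = Suc k * (2 * (2*k + 1) * catalan k)"
    by (simp only: Suc_times_catalan[symmetric]) (simp add: algebra_simps)
  finally show ?thesis
    by (simp only: mult_cancel1) simp
qed

lemma gbinomial_half_Suc_times_neg4_power:
  "((1/2::real) gchoose Suc m) * (-4) ^ Suc m = -2 * real (catalan m)"
proof (induction m)
  case 0
  then show ?case by (simp add: catalan_def)
next
  case (Suc m)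
  have "real (Suc (Suc m)) * ((1/2) gchoose Suc (Suc m)) = (1/2 - real (Suc m)) * ((1/2) gchoose Suc m)"
    by (rule gbinomial_absorb_Suc)
  then have step: "((1/2::real) gchoose Suc (Suc m)) = (1/2 gchoose Suc m) * (1/2 - real (Suc m)) / real (Suc (Suc m))"
    by (simp add: field_simps)
  then have "((1/2::real) gchoose Suc (Suc m)) * (-4) ^ Suc (Suc m)
      = ((1/2 gchoose Suc m) * (-4) ^ Suc m) * ((1/2 - real (Suc m)) * (-4) / real (Suc (Suc m)))"
    by (subst step) (simp add: field_simps)
  also have "\<dots> = -2 * (2 * (2 * real m + 1) * real (catalan m)) / (real m + 2)"
    unfolding Suc.IH by (simp add: field_simps)
  also have "\<dots> = -2 * real (catalan (Suc m))"
    using arg_cong[OF catalan_Suc[of m], of real] by (simp add: field_simps)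
  finally show ?case .
qed

lemma catalan_fps_quadratic:
  defines "C \<equiv> Abs_fps (\<lambda>n. real (catalan n))"
  shows "(1 - 2 * fps_X * C)\<^sup>2 = 1 - 4 * fps_X"
proof -
  define G where "G = Abs_fps (\<lambda>n. ((1/2::real) gchoose n) * (-4) ^ n)"
  have "G = 1 - 2 * fps_X * C"
  proof (rule fps_ext)
    fix n
    show "G $ n = (1 - 2 * fps_X * C) $ n"
    proof (cases n)
      case 0
      then show ?thesis by (simp add: G_def C_def)
    next
      case (Suc m)
      have "(2 * fps_X * C) $ Suc m = 2 * C $ m"
        by (simp add: mult.assoc numeral_fps_const)
      then show ?thesis
        using Suc gbinomial_half_Suc_times_neg4_power[of m] by (simp add: G_def C_def)
    qed
  qed
  moreover have "G * G = 1 - 4 * fps_X"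
  proof (rule fps_ext)
    fix n
    have "(G * G) $ n = (fps_binomial (1/2) * fps_binomial (1/2)) $ n * (-4) ^ n"
      unfolding fps_mult_nth G_def
      by (auto simp: power_add[symmetric] sum_distrib_right intro!: sum.cong)
    also have "fps_binomial (1/2) * fps_binomial (1/2) = fps_binomial (1::real)"
      using fps_binomial_add_mult[of "1/2::real" "1/2"] by simp
    also have "fps_binomial (1::real) $ n * (-4) ^ n = (1 - 4 * fps_X) $ n"
      using binomial_gbinomial[of 1 n, where 'a=real]
      by (cases n; cases "n - 1") (auto simp: fps_numeral_nth)
    finally show "(G * G) $ n = (1 - 4 * fps_X) $ n" .
  qed
  ultimately show ?thesis
    by (simp add: power2_eq_square)
qed

lemma catalan_convolution: "catalan (Suc m) = (\<Sum>i\<le>m. catalan i * catalan (m - i))"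
proof -
  define C where "C = Abs_fps (\<lambda>n. real (catalan n))"
  have "4 * fps_X * (fps_X * C * C - C + 1) = 0"
    using catalan_fps_quadratic unfolding C_def[symmetric]
    by (simp add: power2_eq_square algebra_simps)
  then have "(fps_X * C * C - C + 1) $ Suc m = 0"
    by simp
  then have "(C * C) $ m = C $ Suc m"
    by (simp add: mult.assoc)
  then have "real (catalan (Suc m)) = real (\<Sum>i\<le>m. catalan i * catalan (m - i))"
    by (simp add: fps_mult_nth C_def atLeast0AtMost)
  then show ?thesis
    by (simp only: of_nat_eq_iff)
qed

text \<open>Unlike binom(K+k, K-k), which truncated subtraction makes 1 for k > K, the symmetric form
binom(K+k, 2k) vanishes beyond the degree, so sums over k need no explicit bound.\<close>
definition b_coeff :: "nat \<Rightarrow> nat \<Rightarrow> nat" where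
  "b_coeff K k = catalan k * ((K + k) choose (2*k))"

lemma b_coeff_eq_0: "K < k \<Longrightarrow> b_coeff K k = 0"
  by (simp add: b_coeff_def)

lemma b_coeff_0 [simp]: "b_coeff K 0 = 1"
  by (simp add: b_coeff_def catalan_def)

lemma b_coeff_Suc_Suc:
  "b_coeff (Suc K) (Suc m) = b_coeff K (Suc m) + (\<Sum>l\<le>K. \<Sum>i\<le>m. b_coeff l i * b_coeff (K - l) (m - i))"
proof -
  have "(\<Sum>l\<le>K. \<Sum>i\<le>m. b_coeff l i * b_coeff (K - l) (m - i))
      = (\<Sum>i\<le>m. catalan i * catalan (m - i) *
           (\<Sum>l\<le>K. ((l + i) choose (2*i)) * ((K - l + (m - i)) choose (2*(m - i)))))"
    by (subst sum.swap) (auto simp: b_coeff_def sum_distrib_left ac_simps intro!: sum.cong)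
  also have "\<dots> = (\<Sum>i\<le>m. catalan i * catalan (m - i) * ((K + m + 1) choose (2*m + 1)))"
  proof (intro sum.cong refl)
    fix i assume "i \<in> {..m}"
    then have "K + i + (m - i) + 1 = K + m + 1" "2*i + 2*(m - i) + 1 = 2*m + 1"
      by auto
    then have "(\<Sum>l\<le>K. ((l + i) choose (2*i)) * ((K - l + (m - i)) choose (2*(m - i))))
        = (K + m + 1) choose (2*m + 1)"
      using sum_choose_mult_choose_upper_shifted[of i "2*i" "m - i" "2*(m - i)" K] by simp
    then show "catalan i * catalan (m - i) *
           (\<Sum>l\<le>K. ((l + i) choose (2*i)) * ((K - l + (m - i)) choose (2*(m - i))))
        = catalan i * catalan (m - i) * ((K + m + 1) choose (2*m + 1))"
      by (simp only:)
  qed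
  also have "\<dots> = catalan (Suc m) * ((K + m + 1) choose (2*m + 1))"
    by (simp add: catalan_convolution sum_distrib_right)
  moreover have "b_coeff (Suc K) (Suc m) = b_coeff K (Suc m) + catalan (Suc m) * ((K + m + 1) choose (2*m + 1))"
    by (simp add: b_coeff_def algebra_simps)
  ultimately show ?thesis
    by simp
qed

lemma b_coeff_Suc_index: "(K + 1 - k) * b_coeff (K + 1) k = (K + 1 + k) * b_coeff K k"
proof -
  have "(K + 1 + k - 2*k) * ((K + 1 + k) choose (2*k)) = (K + 1 + k) * ((K + k) choose (2*k))"
    using binomial_absorb_comp[of "K + 1 + k" "2*k"] by simp
  moreover have "K + 1 + k - 2*k = K + 1 - k"
    by simp
  ultimately show ?thesis
    by (simp add: b_coeff_def ac_simps)
qed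

lemma b_coeff_Suc_exponent: "(k + 1) * (k + 2) * b_coeff K (Suc k) = (K + k + 1) * (K - k) * b_coeff K k"
proof -
  have upper: "(2*k + 2) * ((K + k + 1) choose (2*k + 2)) = (K + k + 1) * ((K + k) choose (2*k + 1))"
    using Suc_times_binomial[of "2*k + 1" "K + k"] by simp
  have lower: "(2*k + 1) * ((K + k) choose (2*k + 1)) = (K - k) * ((K + k) choose (2*k))"
    using binomial_absorb_Suc[of "2*k" "K + k"] by simp
  have "(k + 1) * (k + 2) * b_coeff K (Suc k)
      = (k + 1) * ((k + 2) * catalan (Suc k)) * ((K + k + 1) choose (2*k + 2))"
    by (simp add: b_coeff_def algebra_simps del: binomial_Suc_Suc)
  also have "\<dots> = catalan k * (2*k + 1) * ((2*k + 2) * ((K + k + 1) choose (2*k + 2)))"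
    by (simp only: catalan_Suc) (simp add: algebra_simps)
  also have "\<dots> = catalan k * (K + k + 1) * ((2*k + 1) * ((K + k) choose (2*k + 1)))"
    by (simp only: upper) (simp add: algebra_simps)
  also have "\<dots> = (K + k + 1) * (K - k) * b_coeff K k"
    by (simp only: lower) (simp only: b_coeff_def ac_simps)
  finally show ?thesis .
qed

lemma b_coeff_recurrence_Suc:
  assumes "s \<le> n"
  shows "(n + 3) * b_coeff (n + 2) (Suc s) + n * b_coeff n (Suc s)
       = (2*n + 3) * (b_coeff (n + 1) (Suc s) + 2 * b_coeff (n + 1) s)"
proof -
  obtain d where n: "n = s + d"
    using assms le_Suc_ex by blast
  define Y U V W where "Y = real (b_coeff (n + 2) (Suc s))" and "U = real (b_coeff (n + 1) (Suc s))"
    and "V = real (b_coeff n (Suc s))" and "W = real (b_coeff (n + 1) s)"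
  have R1: "(real d + 1) * Y = (2 * real s + real d + 3) * U"
    using arg_cong[OF b_coeff_Suc_index[of "n + 1" "Suc s"], of real]
    by (simp add: n Y_def U_def algebra_simps)
  have R2: "real d * U = (2 * real s + real d + 2) * V"
    using arg_cong[OF b_coeff_Suc_index[of n "Suc s"], of real]
    by (simp add: n U_def V_def algebra_simps)
  have R3: "(real s + 1) * (real s + 2) * U = (2 * real s + real d + 2) * (real d + 1) * W"
    using arg_cong[OF b_coeff_Suc_exponent[of s "n + 1"], of real]
    by (simp add: n U_def W_def algebra_simps)
  have "(real d + 1) * (2 * real s + real d + 2) * ((real s + real d + 3) * Y + (real s + real d) * V)
      = (real d + 1) * (2 * real s + real d + 2) * ((2 * real s + 2 * real d + 3) * (U + 2 * W))"
    using R1 R2 R3 by algebra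
  then have "(real s + real d + 3) * Y + (real s + real d) * V = (2 * real s + 2 * real d + 3) * (U + 2 * W)"
    by (simp add: add_pos_pos)
  then show ?thesis
    unfolding Y_def U_def V_def W_def of_nat_eq_iff[symmetric, where 'a=real] by (simp add: n algebra_simps)
qed

lemma b_coeff_recurrence:
  "(n + 3) * b_coeff (n + 2) k + n * b_coeff n k
     = (2*n + 3) * (b_coeff (n + 1) k + (case k of 0 \<Rightarrow> 0 | Suc s \<Rightarrow> 2 * b_coeff (n + 1) s))"
proof (cases k)
  case 0
  then show ?thesis by simp
next
  case (Suc s)
  consider "s \<le> n" | "s = n + 1" | "n + 1 < s"
    by linarith
  then show ?thesis
  proof cases
    case 1
    then show ?thesis using Suc b_coeff_recurrence_Suc by simp
  next
    case 2
    then have "b_coeff (n + 2) k = catalan (n + 2)" "b_coeff (n + 1) s = catalan (n + 1)"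
      using Suc by (simp_all add: b_coeff_def mult_2)
    then show ?thesis
      using Suc 2 catalan_Suc[of "n + 1"] by (simp add: b_coeff_eq_0 algebra_simps)
  next
    case 3
    then show ?thesis using Suc by (simp add: b_coeff_eq_0)
  qed
qed

definition b_poly :: "nat \<Rightarrow> 'a::comm_semiring_1 poly" where
  "b_poly K = (\<Sum>k\<le>K. monom (of_nat (b_coeff K k)) k)"

lemma coeff_b_poly: "coeff (b_poly K) k = of_nat (b_coeff K k)"
  by (auto simp: b_poly_def coeff_sum coeff_monom b_coeff_eq_0)

lemma poly_b_poly: "poly (b_poly K) z = bK K z"
  unfolding b_poly_def bK_def atLeast0AtMost poly_sum poly_monom
proof (rule sum.cong)
  fix k assume "k \<in> {..K}"
  then have "(K + k) choose (K - k) = (K + k) choose (2*k)"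
    using binomial_symmetric[of "2*k" "K + k"] by simp
  then show "of_nat (b_coeff K k) * z ^ k = of_nat (catalan k) * of_nat ((K + k) choose (K - k)) * z ^ k"
    by (simp add: b_coeff_def)
qed simp

lemma b_poly_Suc: "b_poly (Suc K) = b_poly K + pCons 0 (\<Sum>l\<le>K. b_poly l * b_poly (K - l))"
proof (rule poly_eqI)
  fix k
  show "coeff (b_poly (Suc K)) k = coeff (b_poly K + pCons 0 (\<Sum>l\<le>K. b_poly l * b_poly (K - l))) k"
    by (cases k) (simp_all add: coeff_b_poly coeff_sum coeff_mult b_coeff_Suc_Suc atLeast0AtMost)
qed

lemma b_poly_recurrence:
  "smult (of_nat (n + 3)) (b_poly (n + 2) :: 'a::comm_semiring_1 poly) + smult (of_nat n) (b_poly n)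
     = smult (of_nat (2*n + 3)) (b_poly (n + 1) + smult 2 (pCons 0 (b_poly (n + 1))))"
  (is "?L = ?R")
proof (rule poly_eqI)
  fix k
  have "coeff ?L k = of_nat ((n + 3) * b_coeff (n + 2) k + n * b_coeff n k)"
    by (simp add: coeff_b_poly)
  also have "\<dots> = of_nat ((2*n + 3) * (b_coeff (n + 1) k
      + (case k of 0 \<Rightarrow> 0 | Suc s \<Rightarrow> 2 * b_coeff (n + 1) s)))"
    by (simp only: b_coeff_recurrence)
  also have "\<dots> = coeff ?R k"
    by (cases k) (simp_all add: coeff_b_poly coeff_pCons)
  finally show "coeff ?L k = coeff ?R k" .
qed

theorem lemma4:
  fixes z :: complex
  shows "(\<forall>K\<ge>2. of_nat (K+1) * bK K z
            = of_nat (2*K-1) * (1 + 2*z) * bK (K-1) z - of_nat (K-2) * bK (K-2) z)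
       \<and> (\<forall>K. bK (K+1) z = bK K z + z * (\<Sum>l=0..K. bK l z * bK (K-l) z))
       \<and> bK 0 z = 1 \<and> bK 1 z = 1 + z"
proof (intro conjI allI impI)
  fix K :: nat
  assume "K \<ge> 2"
  then obtain n where K: "K = n + 2"
    using le_Suc_ex by (metis add.commute)
  have "of_nat (n + 3) * bK (n + 2) z + of_nat n * bK n z
      = of_nat (2*n + 3) * (bK (n + 1) z + 2 * (z * bK (n + 1) z))"
    using arg_cong[OF b_poly_recurrence[of n], of "\<lambda>p. poly p z"] by (simp add: poly_b_poly)
  then show "of_nat (K+1) * bK K z
      = of_nat (2*K-1) * (1 + 2*z) * bK (K-1) z - of_nat (K-2) * bK (K-2) z"
    unfolding K by (simp add: algebra_simps eq_diff_eq)
next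
  fix K
  show "bK (K+1) z = bK K z + z * (\<Sum>l=0..K. bK l z * bK (K-l) z)"
    using arg_cong[OF b_poly_Suc[of K], of "\<lambda>p. poly p z"]
    by (simp add: poly_b_poly poly_sum atLeast0AtMost)
next
  have "catalan 0 = 1" "catalan 1 = 1"
    unfolding catalan_def by (simp_all add: numeral_2_eq_2)
  then show "bK 0 z = 1" "bK 1 z = 1 + z"
    by (simp_all add: bK_def)
qed

end
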